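(* Let $n\geq 2$, $\Lambda=U^{\oplus 3}\oplus E_8(-1)^{\oplus 2}\oplus\mathbb{Z}\ell$ with $(\ell,\ell)=-2(n-1)$, let $\gamma$ be a positive divisor of $2(n-1)$, $a$ an integer coprime to $\gamma$, and $t$ an integer with $d:=\gamma^2t-(n-1)a^2>0$; set $h=\gamma(e+tf)-a\ell$. Then restriction $O(\Lambda,h)\to O(\Lambda_h)$ induces an isomorphism $\widetilde{O}(\Lambda,h)\cong\widetilde{O}(\Lambda_h)$.
   Context: $e,f$ is the standard basis of the first copy of $U$. $\Lambda_h=h^\perp\subset\Lambda$. For an even lattice $L$, $D(L)=L^\vee/L$ is its discriminant group and $\widetilde{O}(L)$ is the group of isometries of $L$ inducing the identity on $D(L)$. $O(\Lambda,h)$ is the stabilizer of $h$ in $O(\Lambda)$ and $\widetilde{O}(\Lambda,h)=\widetilde{O}(\Lambda)\cap O(\Lambda,h)$. Here $h$ is primitive of square $2d$ and divisibility $\gamma$. *)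

theory Defs
  imports Complex_Main "HOL-Algebra.Group"
begin

text \<open>Lambda = U^3 + E8(-1)^2 + Z l, (l,l) = -2(n-1), realised inside Q^23
  (rational vectors nat => rat supported on {..<23}).  Coordinates:
  0..5 = three copies of U (basis e,f of the first copy = coordinates 0,1),
  6..13 and 14..21 = two copies of E8(-1), 22 = l.\<close>

type_synonym qvec = "nat \<Rightarrow> rat"

definition e8 :: "nat \<Rightarrow> nat \<Rightarrow> int" where
  "e8 i j = (if i = j then 2
     else if {i, j} \<in> {{0,1},{1,2},{2,3},{3,4},{4,5},{5,6},{4,7}} then -1 else 0)"

definition gram :: "int \<Rightarrow> nat \<Rightarrow> nat \<Rightarrow> int" where
  "gram n i j =
    (if i < 6 \<and> j < 6 then (if i div 2 = j div 2 \<and> i \<noteq> j then 1 else 0)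
     else if 6 \<le> i \<and> i < 14 \<and> 6 \<le> j \<and> j < 14 then - e8 (i - 6) (j - 6)
     else if 14 \<le> i \<and> i < 22 \<and> 14 \<le> j \<and> j < 22 then - e8 (i - 14) (j - 14)
     else if i = 22 \<and> j = 22 then - 2 * (n - 1)
     else 0)"

definition bil :: "int \<Rightarrow> qvec \<Rightarrow> qvec \<Rightarrow> rat" where
  "bil n x y = (\<Sum>i<23. \<Sum>j<23. x i * of_int (gram n i j) * y j)"

definition Lam :: "qvec set" where
  "Lam = {x. (\<forall>i. x i \<in> \<int>) \<and> (\<forall>i\<ge>23. x i = 0)}"

definition uvec :: "nat \<Rightarrow> qvec" where
  "uvec k = (\<lambda>i. if i = k then 1 else 0)"

definition e_vec :: qvec where "e_vec = uvec 0"
definition f_vec :: qvec where "f_vec = uvec 1"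
definition ell :: qvec where "ell = uvec 22"

definition hvec :: "int \<Rightarrow> int \<Rightarrow> int \<Rightarrow> qvec" where
  "hvec \<gamma> t a = (\<lambda>i. of_int \<gamma> * (e_vec i + of_int t * f_vec i) - of_int a * ell i)"

definition Lam_h :: "int \<Rightarrow> qvec \<Rightarrow> qvec set" where
  "Lam_h n h = {x \<in> Lam. bil n x h = 0}"

definition qspan :: "qvec set \<Rightarrow> qvec set" where
  "qspan L = {x. \<exists>m::nat. m > 0 \<and> (\<lambda>i. of_nat m * x i) \<in> L}"

definition dual :: "int \<Rightarrow> qvec set \<Rightarrow> qvec set" where
  "dual n L = {x \<in> qspan L. \<forall>v\<in>L. bil n x v \<in> \<int>}"

definition isometries :: "int \<Rightarrow> qvec set \<Rightarrow> (qvec \<Rightarrow> qvec) set" where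
  "isometries n L = {g. bij_betw g L L
      \<and> (\<forall>x\<in>L. \<forall>y\<in>L. g (\<lambda>i. x i + y i) = (\<lambda>i. g x i + g y i))
      \<and> (\<forall>x\<in>L. \<forall>y\<in>L. bil n (g x) (g y) = bil n x y)
      \<and> (\<forall>x. x \<notin> L \<longrightarrow> g x = x)}"

text \<open>Q-linear extension of g to L tensor Q\<close>
definition qext :: "qvec set \<Rightarrow> (qvec \<Rightarrow> qvec) \<Rightarrow> qvec \<Rightarrow> qvec" where
  "qext L g x = (let m = (LEAST m::nat. m > 0 \<and> (\<lambda>i. of_nat m * x i) \<in> L)
                 in (\<lambda>i. g (\<lambda>j. of_nat m * x j) i / of_nat m))"

text \<open>tilde O(L): isometries acting trivially on D(L) = L^vee / L\<close>
definition Otilde :: "int \<Rightarrow> qvec set \<Rightarrow> (qvec \<Rightarrow> qvec) set" where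
  "Otilde n L = {g \<in> isometries n L. \<forall>x\<in>dual n L. (\<lambda>i. qext L g x i - x i) \<in> L}"

definition O_stab :: "int \<Rightarrow> qvec set \<Rightarrow> qvec \<Rightarrow> (qvec \<Rightarrow> qvec) set" where
  "O_stab n L h = {g \<in> isometries n L. g h = h}"

definition Otilde_stab :: "int \<Rightarrow> qvec set \<Rightarrow> qvec \<Rightarrow> (qvec \<Rightarrow> qvec) set" where
  "Otilde_stab n L h = Otilde n L \<inter> O_stab n L h"

definition restr :: "qvec set \<Rightarrow> (qvec \<Rightarrow> qvec) \<Rightarrow> (qvec \<Rightarrow> qvec)" where
  "restr M g = (\<lambda>x. if x \<in> M then g x else x)"

definition map_grp :: "(qvec \<Rightarrow> qvec) set \<Rightarrow> (qvec \<Rightarrow> qvec) monoid" where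
  "map_grp S = \<lparr>carrier = S, mult = (\<lambda>g g'. g \<circ> g'), one = id\<rparr>"

end

theory Submission
  imports Defs "HOL-Library.Function_Algebras"
begin

text \<open>
  Let \<open>M = \<Lambda>\<^sub>h\<close> and write \<open>x \<in> \<Lambda> \<otimes> \<rat>\<close> as \<open>x = x' + c h\<close> with \<open>x' \<bottom> h\<close>.
  Restriction is injective on \<open>O(\<Lambda>, h)\<close> because \<open>M \<oplus> \<int>h\<close> has finite index in \<open>\<Lambda>\<close>.
  An isometry \<open>g\<close> of \<open>M\<close> acting trivially on \<open>D(M)\<close> extends to \<open>g \<oplus> id\<close> on
  \<open>(M \<otimes> \<rat>) \<oplus> \<rat>h\<close>. For \<open>x \<in> \<Lambda>\<close>, and also for \<open>x \<in> \<Lambda>\<^sup>\<or>\<close>, the component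
  \<open>x'\<close> lies in \<open>M\<^sup>\<or>\<close>, so the extension moves \<open>x\<close> by \<open>g x' - x' \<in> M\<close>: it preserves \<open>\<Lambda>\<close> and
  acts trivially on \<open>D(\<Lambda>)\<close>. Conversely, if \<open>f \<in> \<Lambda>\<close> has \<open>(f, h) = \<gamma> = div(h)\<close> (here
  \<open>f\<close> is the second basis vector of \<open>U\<close>), every \<open>y \<in> M\<^sup>\<or>\<close> lifts to
  \<open>y - ((y, f) / \<gamma>) h \<in> \<Lambda>\<^sup>\<or>\<close>; since an element of \<open>O(\<Lambda>, h)\<close> fixes \<open>h\<close>, acting
  trivially on \<open>D(\<Lambda>)\<close> therefore forces its restriction to act trivially on \<open>D(M)\<close>.
\<close>

definition qscale :: "rat \<Rightarrow> qvec \<Rightarrow> qvec" (infixr \<open>*\<^sub>q\<close> 75)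
  where "c *\<^sub>q x = (\<lambda>i. c * x i)"

lemma qscale_apply [simp]: "(c *\<^sub>q x) i = c * x i"
  by (simp add: qscale_def)

lemma plus_fun_lambda: "(\<lambda>i. x i + y i) = x + (y :: qvec)"
  by (simp add: fun_eq_iff)

lemma minus_fun_lambda: "(\<lambda>i. x i - y i) = x - (y :: qvec)"
  by (simp add: fun_eq_iff)

lemma qscale_add_right: "c *\<^sub>q (x + y) = c *\<^sub>q x + c *\<^sub>q y"
  and qscale_diff_right: "c *\<^sub>q (x - y) = c *\<^sub>q x - c *\<^sub>q y"
  and qscale_add_left: "(c + d) *\<^sub>q x = c *\<^sub>q x + d *\<^sub>q x"
  and qscale_qscale: "c *\<^sub>q d *\<^sub>q x = (c * d) *\<^sub>q x"
  and qscale_one [simp]: "1 *\<^sub>q x = x"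
  and qscale_zero_left [simp]: "0 *\<^sub>q x = 0"
  and qscale_minus_left: "(- c) *\<^sub>q x = - (c *\<^sub>q x)"
  by (simp_all add: fun_eq_iff algebra_simps)

lemma qscale_eq_0_iff: "c *\<^sub>q x = 0 \<longleftrightarrow> c = 0 \<or> x = 0"
  by (auto simp: fun_eq_iff)

lemma qscale_cancel: "c \<noteq> 0 \<Longrightarrow> c *\<^sub>q x = c *\<^sub>q y \<longleftrightarrow> x = y"
  by (auto simp: fun_eq_iff)

lemma bil_add_left: "bil n (x + y) z = bil n x z + bil n y z"
  and bil_add_right: "bil n z (x + y) = bil n z x + bil n z y"
  and bil_diff_left: "bil n (x - y) z = bil n x z - bil n y z"
  and bil_diff_right: "bil n z (x - y) = bil n z x - bil n z y"
  and bil_uminus_left: "bil n (- x) y = - bil n x y"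
  and bil_qscale_left: "bil n (c *\<^sub>q x) y = c * bil n x y"
  and bil_qscale_right: "bil n x (c *\<^sub>q y) = c * bil n x y"
  by (simp_all add: bil_def fun_eq_iff algebra_simps sum.distrib sum_subtractf sum_negf sum_distrib_left)

lemma bil_zero [simp]: "bil n 0 y = 0" "bil n x 0 = 0"
  by (simp_all add: bil_def fun_eq_iff)

lemma bil_commute: "bil n x y = bil n y x"
proof -
  have "gram n i j = gram n j i" for i j
    unfolding gram_def e8_def by (auto simp: insert_commute)
  then show ?thesis
    unfolding bil_def by (subst sum.swap) (simp add: mult.commute mult.left_commute)
qed

lemma rat_as_int_div_nat:
  fixes c :: rat
  obtains p :: int and q :: nat where "q > 0" "c = of_int p / of_nat q"
proof -
  obtain p q where pq: "quotient_of c = (p, q)" by fastforce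
  then have "q > 0" "c = of_int p / of_int q"
    using quotient_of_denom_pos quotient_of_div by blast+
  then show ?thesis using that[of "nat q" p] by simp
qed

locale qlattice =
  fixes L :: "qvec set"
  assumes zero_mem: "0 \<in> L"
    and add_mem: "x \<in> L \<Longrightarrow> y \<in> L \<Longrightarrow> x + y \<in> L"
    and uminus_mem: "x \<in> L \<Longrightarrow> - x \<in> L"
begin

lemma diff_mem: "x \<in> L \<Longrightarrow> y \<in> L \<Longrightarrow> x - y \<in> L"
  using add_mem[of x "- y"] uminus_mem[of y] by simp

lemma of_nat_qscale_mem: "x \<in> L \<Longrightarrow> of_nat k *\<^sub>q x \<in> L"
  by (induction k) (simp_all add: zero_mem add_mem qscale_add_left)

lemma of_int_qscale_mem: "x \<in> L \<Longrightarrow> of_int k *\<^sub>q x \<in> L"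
  by (cases k rule: int_cases2) (simp_all add: of_nat_qscale_mem uminus_mem qscale_minus_left)

lemma qspan_iff: "x \<in> qspan L \<longleftrightarrow> (\<exists>m::nat. m > 0 \<and> of_nat m *\<^sub>q x \<in> L)"
  by (simp add: qspan_def qscale_def)

lemma mem_qspan: "x \<in> L \<Longrightarrow> x \<in> qspan L"
  using qspan_iff[of x] by (metis of_nat_1 qscale_one zero_less_one)

lemma qspan_common_multiple:
  assumes "x \<in> qspan L" "y \<in> qspan L"
  obtains m :: nat where "m > 0" "of_nat m *\<^sub>q x \<in> L" "of_nat m *\<^sub>q y \<in> L"
proof -
  obtain k l :: nat where k: "k > 0" "of_nat k *\<^sub>q x \<in> L" and l: "l > 0" "of_nat l *\<^sub>q y \<in> L"
    using assms qspan_iff by blast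
  have "of_nat (k * l) *\<^sub>q x \<in> L" "of_nat (k * l) *\<^sub>q y \<in> L"
    using of_nat_qscale_mem[OF k(2), of l] of_nat_qscale_mem[OF l(2), of k]
    by (simp_all add: qscale_qscale mult.commute)
  then show ?thesis using that[of "k * l"] k(1) l(1) by simp
qed

lemma qspan_add: "x \<in> qspan L \<Longrightarrow> y \<in> qspan L \<Longrightarrow> x + y \<in> qspan L"
  by (metis qspan_common_multiple qspan_iff add_mem qscale_add_right)

lemma qspan_qscale:
  assumes "x \<in> qspan L" shows "c *\<^sub>q x \<in> qspan L"
proof -
  obtain m :: nat where m: "m > 0" "of_nat m *\<^sub>q x \<in> L" using assms qspan_iff by blast
  obtain p q where pq: "q > 0" "c = of_int p / of_nat q" by (rule rat_as_int_div_nat)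
  have "of_nat (m * q) * c = of_int p * of_nat m"
    using pq by (simp add: field_simps)
  then have "of_nat (m * q) *\<^sub>q c *\<^sub>q x = of_int p *\<^sub>q of_nat m *\<^sub>q x"
    by (simp only: qscale_qscale)
  then show ?thesis using m pq of_int_qscale_mem qspan_iff by (metis nat_0_less_mult_iff)
qed

lemma qspan_diff: "x \<in> qspan L \<Longrightarrow> y \<in> qspan L \<Longrightarrow> x - y \<in> qspan L"
  using qspan_add[of x "(- 1) *\<^sub>q y"] qspan_qscale[of y "- 1"]
  by (simp add: qscale_minus_left)

end

locale qlattice_map = qlattice +
  fixes g :: "qvec \<Rightarrow> qvec"
  assumes map_add: "x \<in> L \<Longrightarrow> y \<in> L \<Longrightarrow> g (x + y) = g x + g y"
begin

lemma map_zero: "g 0 = 0"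
  using map_add[OF zero_mem zero_mem] by simp

lemma map_uminus: "x \<in> L \<Longrightarrow> g (- x) = - g x"
  using map_add[of x "- x"] uminus_mem[of x] map_zero minus_unique[of "g x" "g (- x)"] by simp

lemma map_diff: "x \<in> L \<Longrightarrow> y \<in> L \<Longrightarrow> g (x - y) = g x - g y"
  using map_add[of x "- y"] map_uminus[of y] uminus_mem[of y] by simp

lemma map_of_nat_qscale: "x \<in> L \<Longrightarrow> g (of_nat k *\<^sub>q x) = of_nat k *\<^sub>q g x"
  by (induction k) (simp_all add: map_zero map_add of_nat_qscale_mem qscale_add_left)

lemma map_of_int_qscale: "x \<in> L \<Longrightarrow> g (of_int k *\<^sub>q x) = of_int k *\<^sub>q g x"
  by (cases k rule: int_cases2)
    (simp_all add: map_of_nat_qscale map_uminus of_nat_qscale_mem qscale_minus_left)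

lemma qext_eq:
  assumes m: "m > 0" "of_nat m *\<^sub>q x \<in> L"
  shows "qext L g x = (1 / of_nat m) *\<^sub>q g (of_nat m *\<^sub>q x)"
proof -
  define k where "k = (LEAST k::nat. k > 0 \<and> of_nat k *\<^sub>q x \<in> L)"
  have "k > 0 \<and> of_nat k *\<^sub>q x \<in> L"
    unfolding k_def by (rule LeastI[of _ m]) (use m in simp)
  then have k: "k > 0" "of_nat k *\<^sub>q x \<in> L" by auto
  have "qext L g x = (1 / of_nat k) *\<^sub>q g (of_nat k *\<^sub>q x)"
    unfolding qext_def Let_def k_def qscale_def by simp
  also have "\<dots> = (1 / of_nat (k * m)) *\<^sub>q of_nat m *\<^sub>q g (of_nat k *\<^sub>q x)"
    using m(1) by (simp add: qscale_qscale)
  also have "of_nat m *\<^sub>q g (of_nat k *\<^sub>q x) = of_nat k *\<^sub>q g (of_nat m *\<^sub>q x)"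
    using map_of_nat_qscale[OF k(2), of m] map_of_nat_qscale[OF m(2), of k]
    by (simp add: qscale_qscale mult.commute)
  also have "(1 / of_nat (k * m)) *\<^sub>q of_nat k *\<^sub>q g (of_nat m *\<^sub>q x)
      = (1 / of_nat m) *\<^sub>q g (of_nat m *\<^sub>q x)"
    using k(1) by (simp add: qscale_qscale)
  finally show ?thesis .
qed

lemma qext_mem: "x \<in> L \<Longrightarrow> qext L g x = g x"
  using qext_eq[of 1 x] by simp

lemma qext_add:
  assumes "x \<in> qspan L" "y \<in> qspan L"
  shows "qext L g (x + y) = qext L g x + qext L g y"
proof -
  obtain m :: nat where m: "m > 0" "of_nat m *\<^sub>q x \<in> L" "of_nat m *\<^sub>q y \<in> L"
    using assms by (rule qspan_common_multiple)
  then show ?thesis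
    using qext_eq[OF m(1)] add_mem map_add by (simp add: qscale_add_right)
qed

lemma qext_qscale:
  assumes "x \<in> qspan L" shows "qext L g (c *\<^sub>q x) = c *\<^sub>q qext L g x"
proof -
  obtain m :: nat where m: "m > 0" "of_nat m *\<^sub>q x \<in> L" using assms qspan_iff by blast
  obtain p q where pq: "q > 0" "c = of_int p / of_nat q" by (rule rat_as_int_div_nat)
  have "of_nat (m * q) * c = of_int p * of_nat m"
    using pq by (simp add: field_simps)
  then have e: "of_nat (m * q) *\<^sub>q c *\<^sub>q x = of_int p *\<^sub>q of_nat m *\<^sub>q x"
    by (simp only: qscale_qscale)
  have mq: "m * q > 0" using m(1) pq(1) by simp
  have "qext L g (c *\<^sub>q x) = (1 / of_nat (m * q)) *\<^sub>q g (of_int p *\<^sub>q of_nat m *\<^sub>q x)"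
    using qext_eq[OF mq] e of_int_qscale_mem[OF m(2)] by metis
  also have "\<dots> = (1 / of_nat (m * q) * of_int p * of_nat m) *\<^sub>q
      (1 / of_nat m) *\<^sub>q g (of_nat m *\<^sub>q x)"
    using map_of_int_qscale[OF m(2)] m(1) by (simp add: qscale_qscale mult.commute)
  also have "\<dots> = c *\<^sub>q qext L g x"
    using qext_eq[OF m] m(1) pq by (simp add: qscale_qscale mult.commute)
  finally show ?thesis .
qed

lemma qext_diff:
  assumes "x \<in> qspan L" "y \<in> qspan L"
  shows "qext L g (x - y) = qext L g x - qext L g y"
  using qext_add[OF assms(1) qspan_qscale[OF assms(2), of "- 1"]] qext_qscale[OF assms(2), of "- 1"]
  by (simp add: qscale_minus_left)

lemma qext_mem_qspan:
  assumes "g ` L \<subseteq> L" "x \<in> qspan L" shows "qext L g x \<in> qspan L"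
proof -
  obtain m :: nat where m: "m > 0" "of_nat m *\<^sub>q x \<in> L" using assms(2) qspan_iff by blast
  have "of_nat m *\<^sub>q qext L g x = (of_nat m * (1 / of_nat m)) *\<^sub>q g (of_nat m *\<^sub>q x)"
    using qext_eq[OF m] by (simp only: qscale_qscale)
  then have "of_nat m *\<^sub>q qext L g x = g (of_nat m *\<^sub>q x)"
    using m(1) by simp
  then show ?thesis using m assms(1) qspan_iff by auto
qed

lemma qext_eq_0D:
  assumes "inj_on g L" "x \<in> qspan L" "qext L g x = 0" shows "x = 0"
proof -
  obtain m :: nat where m: "m > 0" "of_nat m *\<^sub>q x \<in> L" using assms(2) qspan_iff by blast
  then have "g (of_nat m *\<^sub>q x) = g 0"
    using qext_eq[OF m] assms(3) map_zero by (simp add: qscale_eq_0_iff)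
  then have "of_nat m *\<^sub>q x = 0" using assms(1) m(2) zero_mem by (auto dest: inj_onD)
  then show ?thesis using m(1) by (simp add: qscale_eq_0_iff)
qed

lemma qext_surj:
  assumes "L \<subseteq> g ` L" "y \<in> qspan L"
  obtains x where "x \<in> qspan L" "qext L g x = y"
proof -
  obtain m :: nat where m: "m > 0" "of_nat m *\<^sub>q y \<in> L" using assms(2) qspan_iff by blast
  then obtain w where w: "w \<in> L" "g w = of_nat m *\<^sub>q y" using assms(1) by (metis imageE subsetD)
  define x where "x = (1 / of_nat m) *\<^sub>q w"
  have mx: "of_nat m *\<^sub>q x = w" using m(1) by (simp add: x_def qscale_qscale)
  then have "x \<in> qspan L" using m(1) w(1) qspan_iff by auto
  have "qext L g x = (1 / of_nat m) *\<^sub>q of_nat m *\<^sub>q y"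
    using qext_eq[OF m(1), of x] mx w by simp
  then have "qext L g x = y" using m(1) by (simp add: qscale_qscale)
  with \<open>x \<in> qspan L\<close> show ?thesis using that by blast
qed

end

locale qlattice_isometry = qlattice +
  fixes n :: int and g :: "qvec \<Rightarrow> qvec"
  assumes isometry: "g \<in> isometries n L"
begin

lemma bij: "bij_betw g L L"
  and map_bil: "x \<in> L \<Longrightarrow> y \<in> L \<Longrightarrow> bil n (g x) (g y) = bil n x y"
  and map_outside: "x \<notin> L \<Longrightarrow> g x = x"
  using isometry by (auto simp: isometries_def)

lemma map_mem: "x \<in> L \<Longrightarrow> g x \<in> L"
  using bij by (auto simp: bij_betw_def)

sublocale qlattice_map L g
  by unfold_locales (use isometry in \<open>auto simp: isometries_def plus_fun_lambda\<close>)

lemma qext_bil: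
  assumes "x \<in> qspan L" "y \<in> qspan L"
  shows "bil n (qext L g x) (qext L g y) = bil n x y"
proof -
  obtain m :: nat where m: "m > 0" "of_nat m *\<^sub>q x \<in> L" "of_nat m *\<^sub>q y \<in> L"
    using assms by (rule qspan_common_multiple)
  then show ?thesis
    using qext_eq[OF m(1)] map_bil[OF m(2,3)] by (simp add: bil_qscale_left bil_qscale_right)
qed

lemma dual_if_qext_dual:
  assumes "x \<in> qspan L" "qext L g x \<in> dual n L" shows "x \<in> dual n L"
  unfolding dual_def
proof (intro CollectI conjI ballI)
  fix v assume "v \<in> L"
  then have "bil n x v = bil n (qext L g x) (g v)"
    using qext_bil[OF assms(1) mem_qspan] qext_mem by simp
  then show "bil n x v \<in> \<int>" using assms(2) map_mem[OF \<open>v \<in> L\<close>] by (simp add: dual_def)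
qed (rule assms(1))

end

definition orth :: "int \<Rightarrow> qvec set \<Rightarrow> qvec \<Rightarrow> qvec set" where
  "orth n L h = {x \<in> L. bil n x h = 0}"

lemma O_stab_iff: "g \<in> O_stab n L h \<longleftrightarrow> g \<in> isometries n L \<and> g h = h"
  by (simp add: O_stab_def)

text \<open>The vector \<open>f\<close> realises the divisibility of \<open>h\<close>: \<open>(f, h)\<close> generates the ideal \<open>(L, h)\<close>.\<close>
locale anisotropic_vector = qlattice L for L +
  fixes n :: int and h f :: qvec
  assumes integral: "x \<in> L \<Longrightarrow> y \<in> L \<Longrightarrow> bil n x y \<in> \<int>"
    and h_mem: "h \<in> L" and f_mem: "f \<in> L"
    and anisotropic: "bil n h h \<noteq> 0"
    and divisibility: "x \<in> L \<Longrightarrow> \<exists>k::int. bil n x h = of_int k * bil n f h"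
begin

abbreviation M where "M \<equiv> orth n L h"

lemma orth_iff: "x \<in> M \<longleftrightarrow> x \<in> L \<and> bil n x h = 0"
  by (simp add: orth_def)

sublocale M: qlattice M
  by unfold_locales
    (auto simp: orth_iff zero_mem add_mem uminus_mem bil_add_left bil_uminus_left)

lemma qspan_orth_iff: "x \<in> qspan M \<longleftrightarrow> x \<in> qspan L \<and> bil n x h = 0"
proof
  assume "x \<in> qspan M"
  then obtain m :: nat where "m > 0" "of_nat m *\<^sub>q x \<in> M" using M.qspan_iff by blast
  then show "x \<in> qspan L \<and> bil n x h = 0" using qspan_iff by (auto simp: orth_iff bil_qscale_left)
next
  assume "x \<in> qspan L \<and> bil n x h = 0"
  then obtain m :: nat where "m > 0" "of_nat m *\<^sub>q x \<in> L" "bil n x h = 0" using qspan_iff by blast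
  then show "x \<in> qspan M" using M.qspan_iff by (auto simp: orth_iff bil_qscale_left)
qed

lemma bil_f_h_nonzero: "bil n f h \<noteq> 0"
  using divisibility[OF h_mem] anisotropic by auto

definition hcoeff :: "qvec \<Rightarrow> rat" where
  "hcoeff x = bil n x h / bil n h h"

definition proj :: "qvec \<Rightarrow> qvec" where
  "proj x = x - hcoeff x *\<^sub>q h"

lemma proj_plus_hcoeff: "proj x + hcoeff x *\<^sub>q h = x"
  by (simp add: proj_def)

lemma bil_proj_h: "bil n (proj x) h = 0"
  using anisotropic by (simp add: proj_def hcoeff_def bil_diff_left bil_qscale_left)

lemma hcoeff_add: "hcoeff (x + y) = hcoeff x + hcoeff y"
  and hcoeff_qscale: "hcoeff (c *\<^sub>q x) = c * hcoeff x"
  and hcoeff_h: "hcoeff h = 1"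
  using anisotropic by (simp_all add: hcoeff_def bil_add_left bil_qscale_left add_divide_distrib)

lemma hcoeff_orth: "x \<in> M \<Longrightarrow> hcoeff x = 0"
  by (simp add: hcoeff_def orth_iff)

lemma proj_add: "proj (x + y) = proj x + proj y"
  and proj_qscale: "proj (c *\<^sub>q x) = c *\<^sub>q proj x"
  and proj_h: "proj h = 0"
  by (simp_all add: proj_def hcoeff_add hcoeff_qscale hcoeff_h qscale_add_left
      qscale_diff_right qscale_qscale)

lemma proj_orth: "x \<in> M \<Longrightarrow> proj x = x"
  by (simp add: proj_def hcoeff_orth)

lemma proj_qspan: "x \<in> qspan L \<Longrightarrow> proj x \<in> qspan M"
  using bil_proj_h[of x] qspan_diff qspan_qscale mem_qspan[OF h_mem]
  by (simp add: qspan_orth_iff proj_def)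

lemma proj_dual:
  assumes "x \<in> qspan L" "\<And>v. v \<in> M \<Longrightarrow> bil n x v \<in> \<int>"
  shows "proj x \<in> dual n M"
proof -
  have "bil n (proj x) v = bil n x v" if "v \<in> M" for v
    using that bil_commute[of n h v] by (simp add: proj_def orth_iff bil_diff_left bil_qscale_left)
  then show ?thesis using assms proj_qspan by (simp add: dual_def)
qed

lemma proj_mem_dual: "x \<in> L \<Longrightarrow> proj x \<in> dual n M"
  using proj_dual mem_qspan integral by (simp add: orth_iff)

lemma proj_dual_dual: "x \<in> dual n L \<Longrightarrow> proj x \<in> dual n M"
  using proj_dual by (simp add: dual_def orth_iff)

lemma image_orth:
  assumes "g \<in> O_stab n L h" shows "g ` M = M"
proof -
  interpret G: qlattice_isometry L n g using assms by unfold_locales (simp add: O_stab_iff)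
  have bil_h: "bil n (g x) h = bil n x h" if "x \<in> L" for x
    using G.map_bil[OF that h_mem] assms by (simp add: O_stab_iff)
  show ?thesis
  proof
    show "g ` M \<subseteq> M" using G.map_mem bil_h by (auto simp: orth_iff)
    show "M \<subseteq> g ` M"
    proof
      fix y assume y: "y \<in> M"
      then obtain x where "x \<in> L" "y = g x" using G.bij by (auto simp: orth_iff bij_betw_def)
      then show "y \<in> g ` M" using y bil_h by (auto simp: orth_iff)
    qed
  qed
qed

lemma restr_isometry:
  assumes g: "g \<in> O_stab n L h" shows "restr M g \<in> isometries n M"
proof -
  interpret G: qlattice_isometry L n g using g by unfold_locales (simp add: O_stab_iff)
  have on_M: "x \<in> M \<Longrightarrow> restr M g x = g x" for x by (simp add: restr_def)
  have "inj_on g M" using G.bij by (auto simp: bij_betw_def orth_def intro: inj_on_subset)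
  then have "bij_betw g M M" using image_orth[OF g] by (rule bij_betw_imageI)
  then have "bij_betw (restr M g) M M" using bij_betw_cong[of M g "restr M g"] on_M by simp
  moreover have "restr M g (x + y) = restr M g x + restr M g y" if "x \<in> M" "y \<in> M" for x y
    using that M.add_mem G.map_add on_M by (simp add: orth_iff)
  ultimately show ?thesis
    using G.map_bil on_M by (auto simp: isometries_def plus_fun_lambda restr_def orth_iff)
qed

lemma restr_comp:
  assumes "g \<in> O_stab n L h" "g' \<in> O_stab n L h"
  shows "restr M (g \<circ> g') = restr M g \<circ> restr M g'"
  using image_orth[OF assms(2)] by (auto simp: restr_def fun_eq_iff)

lemma multiple_mem_orth_plus_h:
  assumes "x \<in> L"
  obtains d k :: int where "d \<noteq> 0" "of_int d *\<^sub>q x - of_int k *\<^sub>q h \<in> M"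
proof -
  obtain d where d: "bil n h h = of_int d * bil n f h" using divisibility[OF h_mem] by blast
  obtain k where k: "bil n x h = of_int k * bil n f h" using divisibility[OF assms] by blast
  have "of_int d *\<^sub>q x - of_int k *\<^sub>q h \<in> L"
    using assms h_mem of_int_qscale_mem diff_mem by blast
  moreover have "bil n (of_int d *\<^sub>q x - of_int k *\<^sub>q h) h = 0"
    using d k by (simp add: bil_diff_left bil_qscale_left)
  moreover have "d \<noteq> 0" using d anisotropic by auto
  ultimately show ?thesis using that by (simp add: orth_iff)
qed

lemma restr_inj:
  assumes g1: "g1 \<in> O_stab n L h" and g2: "g2 \<in> O_stab n L h"
    and eq: "restr M g1 = restr M g2"
  shows "g1 = g2"
proof
  fix x
  show "g1 x = g2 x"
  proof (cases "x \<in> L")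
    case False
    then show ?thesis using g1 g2 by (simp add: O_stab_iff isometries_def)
  next
    case True
    obtain d k :: int where d: "d \<noteq> 0" and w: "of_int d *\<^sub>q x - of_int k *\<^sub>q h \<in> M"
      using multiple_mem_orth_plus_h[OF True] .
    define w where "w = of_int d *\<^sub>q x - of_int k *\<^sub>q h"
    have "of_int d *\<^sub>q g x = g w + of_int k *\<^sub>q h" if "g \<in> O_stab n L h" for g
    proof -
      interpret G: qlattice_isometry L n g using that by unfold_locales (simp add: O_stab_iff)
      have "of_int d *\<^sub>q x = w + of_int k *\<^sub>q h" by (simp add: w_def)
      then show ?thesis
        using G.map_add[of w] G.map_of_int_qscale w True h_mem that of_int_qscale_mem
        by (metis O_stab_iff orth_iff w_def)
    qed
    moreover have "g1 w = g2 w" using eq w by (metis restr_def w_def)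
    ultimately have "of_int d *\<^sub>q g1 x = of_int d *\<^sub>q g2 x" using g1 g2 by simp
    then show ?thesis using d by (simp add: qscale_cancel)
  qed
qed

lemma dual_orth_lift:
  assumes y: "y \<in> dual n M"
  shows "y - (bil n y f / bil n f h) *\<^sub>q h \<in> dual n L"
proof -
  define c where "c = bil n y f / bil n f h"
  have "bil n (y - c *\<^sub>q h) v \<in> \<int>" if v: "v \<in> L" for v
  proof -
    obtain k where k: "bil n v h = of_int k * bil n f h" using divisibility[OF v] by blast
    then have "v - of_int k *\<^sub>q f \<in> M"
      using v f_mem by (simp add: orth_iff diff_mem of_int_qscale_mem bil_diff_left bil_qscale_left)
    moreover have "bil n (y - c *\<^sub>q h) v = bil n y (v - of_int k *\<^sub>q f)"
      using k bil_f_h_nonzero bil_commute[of n h v]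
      by (simp add: c_def bil_diff_left bil_diff_right bil_qscale_left bil_qscale_right)
    ultimately show ?thesis using y by (simp add: dual_def)
  qed
  moreover have "y - c *\<^sub>q h \<in> qspan L"
    using y qspan_diff qspan_qscale mem_qspan[OF h_mem] by (simp add: dual_def qspan_orth_iff)
  ultimately show ?thesis by (simp add: dual_def c_def)
qed

lemma qext_restr:
  assumes g: "g \<in> O_stab n L h" and y: "y \<in> qspan M"
  shows "qext M (restr M g) y = qext L g y"
proof -
  interpret G: qlattice_isometry L n g using g by unfold_locales (simp add: O_stab_iff)
  interpret R: qlattice_isometry M n "restr M g" using restr_isometry[OF g] by unfold_locales
  obtain m :: nat where m: "m > 0" "of_nat m *\<^sub>q y \<in> M" using y M.qspan_iff by blast
  then show ?thesis using G.qext_eq[OF m(1)] R.qext_eq[OF m] by (simp add: orth_iff restr_def)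
qed

lemma restr_Otilde:
  assumes g: "g \<in> Otilde_stab n L h" shows "restr M g \<in> Otilde n M"
proof -
  have gO: "g \<in> O_stab n L h" and gh: "g h = h"
    and acts_trivially: "\<And>x. x \<in> dual n L \<Longrightarrow> qext L g x - x \<in> L"
    using g by (auto simp: Otilde_stab_def Otilde_def O_stab_def minus_fun_lambda)
  interpret G: qlattice_isometry L n g using gO by unfold_locales (simp add: O_stab_iff)
  have hq: "h \<in> qspan L" by (rule mem_qspan[OF h_mem])
  have "qext M (restr M g) y - y \<in> M" if y: "y \<in> dual n M" for y
  proof -
    have yq: "y \<in> qspan L" "bil n y h = 0" using y by (auto simp: dual_def qspan_orth_iff)
    define c where "c = bil n y f / bil n f h"
    have "qext L g (y - c *\<^sub>q h) - (y - c *\<^sub>q h) = qext L g y - y"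
      using G.qext_diff[OF yq(1) qspan_qscale[OF hq]] G.qext_qscale[OF hq] G.qext_mem[OF h_mem] gh
      by simp
    then have "qext L g y - y \<in> L" using acts_trivially dual_orth_lift[OF y] by (metis c_def)
    moreover have "bil n (qext L g y - y) h = 0"
      using G.qext_bil[OF yq(1) hq] G.qext_mem[OF h_mem] gh yq(2) by (simp add: bil_diff_left)
    ultimately show ?thesis using qext_restr[OF gO] y by (simp add: orth_iff dual_def)
  qed
  then show ?thesis using restr_isometry[OF gO] by (simp add: Otilde_def minus_fun_lambda)
qed

lemma bil_orth_plus_h:
  assumes "bil n a h = 0" "bil n b h = 0"
  shows "bil n (a + c *\<^sub>q h) (b + d *\<^sub>q h) = bil n a b + c * d * bil n h h"
  using assms bil_commute[of n h b]
  by (simp add: bil_add_left bil_add_right bil_qscale_left bil_qscale_right)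

definition extend :: "(qvec \<Rightarrow> qvec) \<Rightarrow> qvec \<Rightarrow> qvec" where
  "extend g x = (if x \<in> L then qext M g (proj x) + hcoeff x *\<^sub>q h else x)"

context
  fixes g assumes g: "g \<in> Otilde n M"
begin

interpretation G: qlattice_isometry M n g
  using g by unfold_locales (simp add: Otilde_def)

lemma discriminant_trivial: "y \<in> dual n M \<Longrightarrow> qext M g y - y \<in> M"
  using g by (simp add: Otilde_def minus_fun_lambda)

lemma extend_eq: "x \<in> L \<Longrightarrow> extend g x = x + (qext M g (proj x) - proj x)"
  using proj_plus_hcoeff[of x] by (simp add: extend_def algebra_simps)

lemma extend_mem: "x \<in> L \<Longrightarrow> extend g x \<in> L"
  using extend_eq discriminant_trivial[OF proj_mem_dual] add_mem by (simp add: orth_iff)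

lemma extend_add:
  assumes "x \<in> L" "y \<in> L" shows "extend g (x + y) = extend g x + extend g y"
  using assms G.qext_add[OF proj_qspan proj_qspan] mem_qspan add_mem
  by (simp add: extend_def proj_add hcoeff_add qscale_add_left algebra_simps)

lemma bil_qext_proj_h: "x \<in> L \<Longrightarrow> bil n (qext M g (proj x)) h = 0"
  using G.qext_mem_qspan[OF _ proj_qspan[OF mem_qspan]] G.map_mem by (auto simp: qspan_orth_iff)

lemma extend_bil:
  assumes "x \<in> L" "y \<in> L" shows "bil n (extend g x) (extend g y) = bil n x y"
proof -
  have "bil n (extend g x) (extend g y) = bil n (proj x) (proj y) + hcoeff x * hcoeff y * bil n h h"
    using assms bil_orth_plus_h bil_qext_proj_h G.qext_bil proj_qspan mem_qspan
    by (simp add: extend_def)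
  also have "\<dots> = bil n x y"
    using bil_orth_plus_h[OF bil_proj_h bil_proj_h] by (metis proj_plus_hcoeff)
  finally show ?thesis .
qed

lemma extend_h: "extend g h = h"
  using h_mem G.qext_mem[OF M.zero_mem] G.map_zero by (simp add: extend_def proj_h hcoeff_h)

lemma restr_extend: "restr M (extend g) = g"
proof
  fix x show "restr M (extend g) x = g x"
    using G.qext_mem G.map_outside by (simp add: restr_def extend_def orth_iff proj_orth hcoeff_orth)
qed

interpretation E: qlattice_map L "extend g"
  by unfold_locales (rule extend_add)

lemma extend_inj: "inj_on (extend g) L"
proof (rule inj_onI)
  fix x y assume x: "x \<in> L" and y: "y \<in> L" and eq: "extend g x = extend g y"
  define z where "z = x - y"
  have z: "z \<in> L" using x y diff_mem by (simp add: z_def)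
  have ez: "qext M g (proj z) + hcoeff z *\<^sub>q h = 0"
    using E.map_diff[OF x y] eq z by (simp add: z_def extend_def)
  then have "bil n (qext M g (proj z) + hcoeff z *\<^sub>q h) h = 0" by simp
  then have "hcoeff z * bil n h h = 0"
    using bil_qext_proj_h[OF z] by (simp add: bil_add_left bil_qscale_left)
  then have "hcoeff z = 0" using anisotropic by simp
  then have "proj z = 0"
    using ez G.qext_eq_0D[OF _ proj_qspan[OF mem_qspan[OF z]]] G.bij by (simp add: bij_betw_def)
  then show "x = y" using proj_plus_hcoeff[of z] \<open>hcoeff z = 0\<close> by (simp add: z_def)
qed

lemma extend_surj: "L \<subseteq> extend g ` L"
proof
  fix z assume z: "z \<in> L"
  define q where "q = proj z"
  have q: "q \<in> dual n M" using proj_mem_dual[OF z] by (simp add: q_def)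
  then obtain r where r: "r \<in> qspan M" "qext M g r = q"
    using G.qext_surj G.bij by (auto simp: bij_betw_def dual_def)
  then have "r \<in> dual n M" using G.dual_if_qext_dual q by simp
  then have qr: "q - r \<in> M" using discriminant_trivial r(2) by fastforce
  define x where "x = z - (q - r)"
  have x: "x \<in> L" using z qr diff_mem by (simp add: x_def orth_iff)
  have hx: "hcoeff x = hcoeff z"
    using qr by (simp add: x_def hcoeff_def bil_diff_left orth_iff)
  have "proj x = x - hcoeff z *\<^sub>q h" using hx by (simp add: proj_def)
  also have "\<dots> = r" by (simp add: x_def q_def proj_def)
  finally have "extend g x = qext M g r + hcoeff z *\<^sub>q h" using x hx by (simp add: extend_def)
  then have "extend g x = z" using r(2) proj_plus_hcoeff[of z] by (simp add: q_def)
  then show "z \<in> extend g ` L" using x by blast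
qed

lemma extend_isometry: "extend g \<in> isometries n L"
proof -
  have "bij_betw (extend g) L L"
    using extend_inj extend_surj extend_mem by (auto simp: bij_betw_def)
  then show ?thesis
    using extend_add extend_bil by (simp add: isometries_def plus_fun_lambda extend_def)
qed

lemma qext_extend:
  assumes "x \<in> qspan L" shows "qext L (extend g) x = qext M g (proj x) + hcoeff x *\<^sub>q h"
proof -
  obtain m :: nat where m: "m > 0" "of_nat m *\<^sub>q x \<in> L" using assms qspan_iff by blast
  then show ?thesis
    using E.qext_eq[OF m] G.qext_qscale[OF proj_qspan[OF assms]]
    by (simp add: extend_def proj_qscale hcoeff_qscale qscale_add_right qscale_qscale)
qed

lemma extend_Otilde_stab: "extend g \<in> Otilde_stab n L h"
proof -
  have "qext L (extend g) x - x \<in> L" if x: "x \<in> dual n L" for x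
  proof -
    have "qext L (extend g) x - x = qext M g (proj x) - proj x"
      using qext_extend x proj_plus_hcoeff[of x] by (simp add: dual_def algebra_simps)
    then show ?thesis using discriminant_trivial[OF proj_dual_dual[OF x]] by (simp add: orth_iff)
  qed
  then show ?thesis
    using extend_isometry extend_h
    by (simp add: Otilde_stab_def Otilde_def O_stab_def minus_fun_lambda)
qed

end

theorem restr_iso_Otilde: "restr M \<in> iso (map_grp (Otilde_stab n L h)) (map_grp (Otilde n M))"
proof -
  have stab: "Otilde_stab n L h \<subseteq> O_stab n L h" by (auto simp: Otilde_stab_def)
  have "restr M ` Otilde_stab n L h = Otilde n M"
  proof
    show "restr M ` Otilde_stab n L h \<subseteq> Otilde n M" using restr_Otilde by blast
    show "Otilde n M \<subseteq> restr M ` Otilde_stab n L h"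
      using extend_Otilde_stab restr_extend by (metis image_eqI subsetI)
  qed
  moreover have "inj_on (restr M) (Otilde_stab n L h)"
    using restr_inj stab by (auto intro: inj_onI)
  moreover have "restr M \<in> hom (map_grp (Otilde_stab n L h)) (map_grp (Otilde n M))"
    using restr_Otilde restr_comp stab by (auto simp: hom_def map_grp_def)
  ultimately show ?thesis by (simp add: iso_def bij_betw_def map_grp_def)
qed

end

lemma qlattice_Lam: "qlattice Lam"
  by unfold_locales (auto simp: Lam_def)

lemma bil_Lam_Ints: "x \<in> Lam \<Longrightarrow> y \<in> Lam \<Longrightarrow> bil n x y \<in> \<int>"
  unfolding bil_def Lam_def by (intro Ints_sum Ints_mult) auto

lemma bil_uvec: "k < 23 \<Longrightarrow> bil n x (uvec k) = (\<Sum>i<23. x i * of_int (gram n i k))"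
  unfolding bil_def uvec_def by (simp add: if_distrib cong: if_cong)

lemma bil_hvec:
  "bil n x (hvec \<gamma> t a)
     = of_int \<gamma> * x 1 + of_int \<gamma> * of_int t * x 0 + 2 * (of_int n - 1) * of_int a * x 22"
proof -
  have h: "hvec \<gamma> t a = of_int \<gamma> *\<^sub>q uvec 0 + (of_int \<gamma> * of_int t) *\<^sub>q uvec 1 - of_int a *\<^sub>q uvec 22"
    by (simp add: hvec_def e_vec_def f_vec_def ell_def fun_eq_iff algebra_simps)
  have columns: "gram n i 0 = (if i = 1 then 1 else 0)" "gram n i (Suc 0) = (if i = 0 then 1 else 0)"
    "gram n i 22 = (if i = 22 then - 2 * (n - 1) else 0)" for i
    by (auto simp: gram_def)
  show ?thesis
    unfolding h
    by (simp add: bil_add_right bil_diff_right bil_qscale_right bil_uvec columns if_distrib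
        cong: if_cong) (simp add: algebra_simps)
qed

lemma anisotropic_vector_hvec:
  assumes "\<gamma> dvd 2 * (n - 1)" "\<gamma>^2 * t - (n - 1) * a^2 \<noteq> 0"
  shows "anisotropic_vector Lam n (hvec \<gamma> t a) f_vec"
proof -
  interpret qlattice Lam by (rule qlattice_Lam)
  obtain c where "2 * (n - 1) = \<gamma> * c" using assms(1) by blast
  then have c: "2 * (of_int n - 1) = (of_int \<gamma> * of_int c :: rat)"
    by (metis of_int_1 of_int_diff of_int_mult of_int_numeral)
  have f: "bil n f_vec (hvec \<gamma> t a) = of_int \<gamma>"
    by (simp add: bil_hvec f_vec_def uvec_def)
  show ?thesis
  proof
    show "hvec \<gamma> t a \<in> Lam" "f_vec \<in> Lam"
      by (auto simp: Lam_def hvec_def e_vec_def f_vec_def ell_def uvec_def)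
    show "bil n x y \<in> \<int>" if "x \<in> Lam" "y \<in> Lam" for x y
      using that by (rule bil_Lam_Ints)
    have "bil n (hvec \<gamma> t a) (hvec \<gamma> t a) = 2 * of_int (\<gamma>^2 * t - (n - 1) * a^2)"
      unfolding bil_hvec
      by (simp add: hvec_def e_vec_def f_vec_def ell_def uvec_def algebra_simps power2_eq_square)
    then show "bil n (hvec \<gamma> t a) (hvec \<gamma> t a) \<noteq> 0"
      using assms(2) by (metis of_int_eq_0_iff mult_eq_0_iff zero_neq_numeral)
    show "\<exists>k::int. bil n x (hvec \<gamma> t a) = of_int k * bil n f_vec (hvec \<gamma> t a)" if "x \<in> Lam" for x
    proof -
      have "x 1 \<in> \<int>" "x 0 \<in> \<int>" "x 22 \<in> \<int>" using that by (auto simp: Lam_def)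
      then obtain x1 x0 x22 where "x 1 = of_int x1" "x 0 = of_int x0" "x 22 = of_int x22"
        by (metis Ints_cases)
      then have "bil n x (hvec \<gamma> t a) = of_int (x1 + t * x0 + c * a * x22) * of_int \<gamma>"
        using c by (simp add: bil_hvec algebra_simps)
      then show ?thesis using f by metis
    qed
  qed
qed

theorem proposition3p6:
  fixes n \<gamma> a t :: int
  assumes "n \<ge> 2"
    and "\<gamma> > 0" and "\<gamma> dvd 2 * (n - 1)"
    and "coprime a \<gamma>"
    and "\<gamma>^2 * t - (n - 1) * a^2 > 0"
  shows "restr (Lam_h n (hvec \<gamma> t a)) ` O_stab n Lam (hvec \<gamma> t a)
           \<subseteq> isometries n (Lam_h n (hvec \<gamma> t a))
         \<and> restr (Lam_h n (hvec \<gamma> t a))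
           \<in> iso (map_grp (Otilde_stab n Lam (hvec \<gamma> t a)))
                 (map_grp (Otilde n (Lam_h n (hvec \<gamma> t a))))"
proof -
  interpret anisotropic_vector Lam n "hvec \<gamma> t a" f_vec
    using anisotropic_vector_hvec assms(3,5) by simp
  have "Lam_h n (hvec \<gamma> t a) = orth n Lam (hvec \<gamma> t a)"
    by (simp add: Lam_h_def orth_def)
  then show ?thesis using restr_isometry restr_iso_Otilde by auto
qed

end
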